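(* Let $n=p_1^{\alpha_1}p_2^{\alpha_2}p_3^{\alpha_3}$, where $\alpha_1,\alpha_2,\alpha_3$ are positive integers and $p_1<p_2<p_3$ are primes. Let $i,j\in\{1,2,3\}$ with $i<j$. If $1\leq\beta_i\leq\alpha_i$ and $2\leq\beta_j\leq\alpha_j$, then $\deg(p_i^{\beta_i}p_j^{\beta_j})>\deg(p_i^{\beta_i-1}p_j^{\beta_j})$ in $\mathcal{P}(C_n)$.
   Context: For a finite group $G$, the power graph $\mathcal{P}(G)$ is the simple undirected graph with vertex set $G$ in which two distinct vertices are adjacent if one is an integral power of the other. $C_n$ denotes the cyclic group of order $n$, identified with $\mathbb{Z}_n=\{0,1,\ldots,n-1\}$, so a positive divisor $d$ of $n$ is regarded as the element $d\bmod n\in\mathbb{Z}_n$. $\deg(a)$ is the degree of vertex $a$ in $\mathcal{P}(C_n)$. *)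

theory Defs
  imports "HOL-Computational_Algebra.Primes"
begin

text \<open>Cyclic group C_n identified with Z_n = {0,...,n-1} (additive).
  b is an integral power of a iff b = k*a mod n for some integer k.\<close>

definition pg_adj :: "nat \<Rightarrow> nat \<Rightarrow> nat \<Rightarrow> bool" where
  "pg_adj n a b \<longleftrightarrow> a \<noteq> b \<and>
     ((\<exists>k::int. int b = (k * int a) mod int n) \<or> (\<exists>k::int. int a = (k * int b) mod int n))"

definition pg_deg :: "nat \<Rightarrow> nat \<Rightarrow> nat" where
  "pg_deg n a = card {b \<in> {0..<n}. pg_adj n a b}"

end

theory Submission
  imports Defs "HOL-Library.FuncSet" "HOL-Number_Theory.Totient"
begin

text \<open>
  Two residues are adjacent in the power graph of C_n iff their gcds with n are comparable
  under divisibility, so deg a is one less than the number of residues whose gcd with n is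
  comparable to gcd a n.  Put H = p_i^(\<beta>_i-1) p_j^\<beta>_j, G = p_i H and G' = p_i^\<beta>_i p_j^(\<beta>_j-1).
  A residue comparable to H but not to G is a multiple of H, not a multiple of G, and its gcd
  is not H: there are at most n/H - n/G - \<phi>(n/H) of them.  Every residue with gcd G' is
  comparable to G but not to H: there are \<phi>(n/G') of them.  With x = n/G it remains to show
  \<phi>(p_j x) + \<phi>(p_i x) > (p_i - 1) x, which follows from \<phi>(m) \<ge> m \<Prod>(1 - 1/p) over the three
  primes together with (q - 1)(r - 1)(q + p) > pqr for distinct primes p < q and r.
\<close>

lemma mod_multiple_iff_gcd_dvd:
  fixes a b n :: nat
  assumes "b < n"
  shows "(\<exists>k::int. int b = (k * int a) mod int n) \<longleftrightarrow> gcd a n dvd b"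
proof
  assume "\<exists>k::int. int b = (k * int a) mod int n"
  then obtain k where k: "int b = (k * int a) mod int n" by blast
  have "gcd (int a) (int n) dvd (k * int a) mod int n"
    by (intro dvd_mod) auto
  then have "int (gcd a n) dvd int b"
    using k by simp
  then show "gcd a n dvd b"
    by simp
next
  assume "gcd a n dvd b"
  then obtain t where t: "b = gcd a n * t" ..
  obtain u v where uv: "u * int a + v * int n = int (gcd a n)"
    using bezout_int[of "int a" "int n"] by auto
  have "(int t * u * int a) mod int n = (int t * u * int a + int t * v * int n) mod int n"
    by simp
  also have "\<dots> = (int t * (u * int a + v * int n)) mod int n"
    by (simp add: algebra_simps)
  also have "\<dots> = int b mod int n"
    using uv t by (simp add: mult.commute)
  also have "\<dots> = int b"
    using assms by simp
  finally show "\<exists>k::int. int b = (k * int a) mod int n" by metis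
qed

lemma pg_adj_iff_gcd_dvd:
  assumes "a < n" "b < n"
  shows "pg_adj n a b \<longleftrightarrow> a \<noteq> b \<and> (gcd a n dvd gcd b n \<or> gcd b n dvd gcd a n)"
  unfolding pg_adj_def mod_multiple_iff_gcd_dvd[OF assms(1)] mod_multiple_iff_gcd_dvd[OF assms(2)]
  by auto

lemma card_gcd_filter_shift:
  fixes n :: nat and Pr :: "nat \<Rightarrow> bool"
  shows "card {b \<in> {0..<n}. Pr (gcd b n)} = card {b \<in> {0<..n}. Pr (gcd b n)}"
proof (rule bij_betw_same_card[where f = "\<lambda>b. if b = 0 then n else b"])
  show "bij_betw (\<lambda>b. if b = 0 then n else b) {b \<in> {0..<n}. Pr (gcd b n)} {b \<in> {0<..n}. Pr (gcd b n)}"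
    by (rule bij_betwI[where g = "\<lambda>b. if b = n then 0 else b"]) auto
qed

text \<open>Residue 0 is represented by n (both have gcd n with n), so that the library count
  card_gcd_eq_totient over {0<..n} applies.\<close>

definition gcd_comparable :: "nat \<Rightarrow> nat \<Rightarrow> nat set" where
  "gcd_comparable n d = {b \<in> {0<..n}. d dvd gcd b n \<or> gcd b n dvd d}"

lemma finite_gcd_comparable [simp]: "finite (gcd_comparable n d)"
  by (simp add: gcd_comparable_def)

lemma pg_deg_eq_card_gcd_comparable:
  assumes "a < n"
  shows "pg_deg n a = card (gcd_comparable n (gcd a n)) - 1"
proof -
  let ?C = "{b \<in> {0..<n}. gcd a n dvd gcd b n \<or> gcd b n dvd gcd a n}"
  have "{b \<in> {0..<n}. pg_adj n a b} = ?C - {a}"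
    using assms by (auto simp: pg_adj_iff_gcd_dvd)
  then have "pg_deg n a = card ?C - 1"
    using assms by (simp add: pg_deg_def)
  also have "card ?C = card (gcd_comparable n (gcd a n))"
    unfolding gcd_comparable_def by (rule card_gcd_filter_shift)
  finally show ?thesis .
qed

lemma card_multiples:
  fixes n d :: nat
  assumes "n > 0" "d dvd n"
  shows "card {b \<in> {0<..n}. d dvd b} = n div d"
proof -
  have "d > 0" using assms by auto
  have "{b \<in> {0<..n}. d dvd b} = (\<lambda>k. k * d) ` {0<..n div d}"
    using \<open>d > 0\<close> assms by (auto simp: less_eq_div_iff_mult_less_eq elim!: dvdE)
  moreover have "inj_on (\<lambda>k. k * d) {0<..n div d}"
    using \<open>d > 0\<close> by (simp add: inj_on_def)
  ultimately show ?thesis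
    by (simp add: card_image)
qed

lemma card_gcd_comparable_less:
  fixes n G H G' :: nat
  assumes "n > 0" "G dvd n" "H dvd G" "G' dvd G" "\<not> H dvd G'" "\<not> G' dvd H"
    and "n div H < totient (n div G') + totient (n div H) + n div G"
  shows "card (gcd_comparable n H) < card (gcd_comparable n G)"
proof -
  define M where "M d = {b \<in> {0<..n}. d dvd b}" for d
  define E where "E d = {b \<in> {0<..n}. gcd b n = d}" for d
  have "H dvd n" "G' dvd n" using assms(2-4) by (auto intro: dvd_trans)
  have "\<not> G dvd H" using assms(3,4,6) dvd_antisym by blast
  have lost: "gcd_comparable n H - gcd_comparable n G \<subseteq> M H - (M G \<union> E H)"
    using assms(2,3) by (auto simp: gcd_comparable_def M_def E_def intro: dvd_trans)
  have "M G \<union> E H \<subseteq> M H"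
    using assms(3) by (auto simp: M_def E_def intro: dvd_trans)
  then have "card (M H) = card (M G \<union> E H) + card (M H - (M G \<union> E H))"
    using card_Int_Diff[of "M H" "M G \<union> E H"] by (simp add: M_def Int_absorb1)
  also have "card (M G \<union> E H) = card (M G) + card (E H)"
    using assms(2) \<open>\<not> G dvd H\<close> by (intro card_Un_disjoint) (auto simp: M_def E_def)
  finally have "card (M H - (M G \<union> E H)) + n div G + totient (n div H) = n div H"
    using card_multiples[OF assms(1)] card_gcd_eq_totient[OF assms(1)] assms(2) \<open>H dvd n\<close>
    by (simp add: M_def E_def)
  then have lost_bound:
    "card (gcd_comparable n H - gcd_comparable n G) + n div G + totient (n div H) \<le> n div H"
    using card_mono[OF _ lost] by (simp add: M_def)
  have "E G' \<subseteq> gcd_comparable n G - gcd_comparable n H"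
    using assms(4-6) by (auto simp: gcd_comparable_def E_def)
  then have "card (E G') \<le> card (gcd_comparable n G - gcd_comparable n H)"
    by (intro card_mono) auto
  then have gained_bound: "totient (n div G') \<le> card (gcd_comparable n G - gcd_comparable n H)"
    using card_gcd_eq_totient[OF assms(1) \<open>G' dvd n\<close>] by (simp add: E_def)
  have "card (gcd_comparable n H - gcd_comparable n G) < card (gcd_comparable n G - gcd_comparable n H)"
    using lost_bound gained_bound assms(7) by linarith
  then show ?thesis
    using card_Int_Diff[of "gcd_comparable n H" "gcd_comparable n G"]
      card_Int_Diff[of "gcd_comparable n G" "gcd_comparable n H"] by (simp add: Int_commute)
qed

lemma totient_ge_prod_primes:
  fixes m :: nat and S :: "nat set"
  assumes "finite S" "\<And>p. p \<in> S \<Longrightarrow> prime p" "prime_factors m \<subseteq> S"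
  shows "real m * (\<Prod>p\<in>S. 1 - 1 / real p) \<le> real (totient m)"
proof -
  have "(\<Prod>p\<in>S. 1 - 1 / real p)
      = (\<Prod>p\<in>S - prime_factors m. 1 - 1 / real p) * (\<Prod>p\<in>prime_factors m. 1 - 1 / real p)"
    by (rule prod.subset_diff[OF assms(3,1)])
  also have "\<dots> \<le> (\<Prod>p\<in>prime_factors m. 1 - 1 / real p)"
  proof -
    have "1 / real p \<le> 1" if "p \<in> S" for p
      using prime_ge_1_nat[OF assms(2)[OF that]] by simp
    then show ?thesis
      by (intro mult_left_le_one_le prod_nonneg prod_le_1) (auto simp: in_prime_factors_iff)
  qed
  finally show ?thesis
    by (simp add: totient_formula2 mult_left_mono)
qed

lemma three_primes_ineq:
  fixes P Q R :: nat
  assumes "prime P" "prime Q" "prime R" "P < Q" "R \<noteq> P" "R \<noteq> Q"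
  shows "real P * real Q * real R < (real Q - 1) * (real R - 1) * (real Q + real P)"
proof -
  have "2 \<le> P" "2 \<le> Q" "2 \<le> R" using assms prime_ge_2_nat by auto
  show ?thesis
  proof (cases "R = 2")
    case True
    then have "2 < P" "2 < Q"
      using assms \<open>2 \<le> P\<close> \<open>2 \<le> Q\<close> by auto
    then have "odd P" "odd Q"
      using assms prime_odd_nat by auto
    then have "P + 2 \<le> Q"
      using \<open>P < Q\<close> by presburger
    then have "real Q * 1 \<le> real Q * (real Q - real P - 1)"
      by (intro mult_left_mono) auto
    then show ?thesis
      using True \<open>P < Q\<close> by (simp add: algebra_simps)
  next
    case False
    then have "3 \<le> R" "3 \<le> Q" using \<open>2 \<le> R\<close> \<open>2 \<le> P\<close> \<open>P < Q\<close> by auto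
    have "real Q * real R \<le> 2 * (real Q - 1) * (real R - 1)"
    proof (cases "Q = 3")
      case True
      then have "4 \<le> R" using \<open>3 \<le> R\<close> \<open>R \<noteq> Q\<close> by auto
      then show ?thesis using True by (simp add: algebra_simps)
    next
      case False
      then have "4 \<le> Q" using \<open>3 \<le> Q\<close> by auto
      then have "2 * 1 \<le> (real Q - 2) * (real R - 2)"
        using \<open>3 \<le> R\<close> by (intro mult_mono) auto
      then show ?thesis by (simp add: algebra_simps)
    qed
    moreover have "2 * real P + 1 \<le> real Q + real P" using \<open>P < Q\<close> by simp
    ultimately have "real Q * real R * (2 * real P + 1) \<le> 2 * (real Q - 1) * (real R - 1) * (real Q + real P)"
      by (rule mult_mono) (use \<open>3 \<le> Q\<close> \<open>3 \<le> R\<close> in auto)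
    moreover have "0 < real Q * real R" using \<open>3 \<le> Q\<close> \<open>3 \<le> R\<close> by simp
    ultimately show ?thesis by (simp add: algebra_simps)
  qed
qed

lemma prime_factors_three_prime_powers:
  fixes P Q R :: nat
  assumes "prime P" "prime Q" "prime R"
  shows "prime_factors (P ^ a * Q ^ b * R ^ c) \<subseteq> {P, Q, R}"
proof
  fix p assume "p \<in> prime_factors (P ^ a * Q ^ b * R ^ c)"
  then have "prime p" "p dvd P \<or> p dvd Q \<or> p dvd R"
    by (auto simp: in_prime_factors_iff prime_dvd_mult_iff dest: prime_dvd_power)
  then show "p \<in> {P, Q, R}"
    using assms primes_dvd_imp_eq by blast
qed

lemma totient_mult_prime_sum_gt:
  fixes P Q R x :: nat
  assumes "prime P" "prime Q" "prime R" "P < Q" "R \<noteq> P" "R \<noteq> Q"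
    and "x > 0" "prime_factors x \<subseteq> {P, Q, R}"
  shows "P * x < totient (Q * x) + totient (P * x) + x"
proof -
  define f where "f = (\<Prod>p\<in>{P, Q, R}. 1 - 1 / real p)"
  have f_eq: "real P * real Q * real R * f = (real P - 1) * (real Q - 1) * (real R - 1)"
    using assms prime_gt_0_nat by (simp add: f_def field_simps)
  have "(real P - 1) * (real P * real Q * real R)
      < (real P - 1) * ((real Q - 1) * (real R - 1) * (real Q + real P))"
    using three_primes_ineq[OF assms(1-6)] prime_gt_1_nat[OF assms(1)]
    by (intro mult_strict_left_mono) auto
  also have "\<dots> = (real P - 1) * (real Q - 1) * (real R - 1) * (real Q + real P)"
    by (simp only: mult.assoc)
  also have "\<dots> = real P * real Q * real R * ((real Q + real P) * f)"
    by (subst f_eq[symmetric]) (simp only: ac_simps)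
  finally have "real P * real Q * real R * (real P - 1) < real P * real Q * real R * ((real Q + real P) * f)"
    by (simp only: mult.commute)
  then have key: "real P - 1 < (real Q + real P) * f"
    using assms(1-3) prime_gt_0_nat by (simp add: mult_less_cancel_left_pos)
  have tot_bound: "real (D * x) * f \<le> real (totient (D * x))" if "D \<in> {P, Q, R}" for D
  proof (rule totient_ge_prod_primes[of "{P, Q, R}", folded f_def])
    show "prime_factors (D * x) \<subseteq> {P, Q, R}"
      using that assms by (auto simp: prime_factors_product prime_prime_factors)
  qed (use assms in auto)
  have "real (P * x) = (real P - 1) * real x + real x"
    by (simp add: algebra_simps)
  also have "\<dots> < (real Q + real P) * f * real x + real x"
    using key assms(7) by simp
  also have "\<dots> = real (Q * x) * f + real (P * x) * f + real x"
    by (simp add: algebra_simps)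
  also have "\<dots> \<le> real (totient (Q * x)) + real (totient (P * x)) + real x"
    using tot_bound[of Q] tot_bound[of P] by simp
  finally show ?thesis
    by linarith
qed

lemma not_dvd_of_mult_distinct_primes:
  fixes P Q H K :: nat
  assumes "prime P" "prime Q" "P \<noteq> Q" "P * H = Q * K" "H > 0"
  shows "\<not> H dvd K"
proof
  assume "H dvd K"
  then obtain t where "K = H * t" ..
  then have "P = Q * t"
    using assms(4,5) by (simp add: ac_simps)
  then have "Q dvd P" ..
  then show False
    using assms(1-3) primes_dvd_imp_eq by blast
qed

lemma pg_deg_prime_powers_less:
  fixes P Q R A B C bi bj n :: nat
  assumes "prime P" "prime Q" "prime R" "P < Q" "R \<noteq> P" "R \<noteq> Q"
    and "1 \<le> bi" "bi \<le> A" "1 \<le> bj" "bj \<le> B" "n = P ^ A * Q ^ B * R ^ C"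
  shows "pg_deg n ((P ^ (bi - 1) * Q ^ bj) mod n) < pg_deg n ((P ^ bi * Q ^ bj) mod n)"
proof -
  define H where "H = P ^ (bi - 1) * Q ^ bj"
  define G where "G = P ^ bi * Q ^ bj"
  define G' where "G' = P ^ bi * Q ^ (bj - 1)"
  define x where "x = P ^ (A - bi) * Q ^ (B - bj) * R ^ C"
  have "P > 0" "Q > 0" "H > 0" "G > 0" "G' > 0" "x > 0"
    using assms(1-3) prime_gt_0_nat by (auto simp: H_def G_def G'_def x_def)
  have G_eq: "G = P * H" "G = Q * G'"
    using assms(7,9) by (auto simp: G_def H_def G'_def power_eq_if)
  have n_eq: "n = G * x"
    using assms(8,10,11) by (simp add: G_def x_def ac_simps flip: power_add)
  have "n > 0" "G dvd n"
    using \<open>x > 0\<close> \<open>P > 0\<close> \<open>Q > 0\<close> by (auto simp: n_eq G_def)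
  have "H dvd n"
    using \<open>G dvd n\<close> G_eq by (auto intro: dvd_trans)
  have div_G: "n div G = x"
    using \<open>G > 0\<close> by (simp add: n_eq)
  have div_H: "n div H = P * x"
    using \<open>H > 0\<close> by (simp add: n_eq G_eq(1) ac_simps)
  have div_G': "n div G' = Q * x"
    using \<open>G' > 0\<close> by (simp add: n_eq G_eq(2) ac_simps)
  have "card (gcd_comparable n H) < card (gcd_comparable n G)"
  proof (rule card_gcd_comparable_less[OF \<open>n > 0\<close> \<open>G dvd n\<close>, of H G'])
    show "H dvd G"
      by (simp add: G_eq(1))
    show "G' dvd G"
      by (simp add: G_eq(2))
    have "P * H = Q * G'" "P \<noteq> Q"
      using G_eq assms(4) by simp_all
    then show "\<not> H dvd G'" "\<not> G' dvd H"
      using assms(1,2) \<open>H > 0\<close> \<open>G' > 0\<close> by (simp_all add: not_dvd_of_mult_distinct_primes)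
    show "n div H < totient (n div G') + totient (n div H) + n div G"
      unfolding div_G div_H div_G' using assms(1-6) \<open>x > 0\<close>
      by (rule totient_mult_prime_sum_gt) (simp add: x_def prime_factors_three_prime_powers assms)
  qed
  moreover have "n \<in> gcd_comparable n H"
    using \<open>n > 0\<close> \<open>H dvd n\<close> by (simp add: gcd_comparable_def)
  then have "card (gcd_comparable n H) > 0"
    by (auto simp: card_gt_0_iff)
  moreover have "pg_deg n (D mod n) = card (gcd_comparable n D) - 1" if "D dvd n" for D
  proof -
    have "gcd (D mod n) n = D"
      using that by (metis gcd.commute gcd_nat.absorb1 gcd_red_nat)
    then show ?thesis
      using pg_deg_eq_card_gcd_comparable[of "D mod n" n] \<open>n > 0\<close> by simp
  qed
  ultimately have "pg_deg n (H mod n) < pg_deg n (G mod n)"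
    using \<open>H dvd n\<close> \<open>G dvd n\<close> by simp
  then show ?thesis
    by (simp add: H_def G_def)
qed

theorem lemma5p1:
  fixes p \<alpha> :: "nat \<Rightarrow> nat" and n i j bi bj :: nat
  assumes "prime (p 1)" "prime (p 2)" "prime (p 3)"
    and "p 1 < p 2" "p 2 < p 3"
    and "\<alpha> 1 \<ge> 1" "\<alpha> 2 \<ge> 1" "\<alpha> 3 \<ge> 1"
    and "n = p 1 ^ \<alpha> 1 * p 2 ^ \<alpha> 2 * p 3 ^ \<alpha> 3"
    and "i \<in> {1,2,3}" "j \<in> {1,2,3}" "i < j"
    and "1 \<le> bi" "bi \<le> \<alpha> i" "2 \<le> bj" "bj \<le> \<alpha> j"
  shows "pg_deg n ((p i ^ bi * p j ^ bj) mod n) > pg_deg n ((p i ^ (bi - 1) * p j ^ bj) mod n)"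
proof -
  have bj: "1 \<le> bj" using \<open>2 \<le> bj\<close> by simp
  from \<open>i \<in> {1,2,3}\<close> \<open>j \<in> {1,2,3}\<close> \<open>i < j\<close>
  consider "i = 1" "j = 2" | "i = 1" "j = 3" | "i = 2" "j = 3" by auto
  then show ?thesis
  proof cases
    case 1
    with assms bj show ?thesis
      by (intro pg_deg_prime_powers_less[where R = "p 3" and C = "\<alpha> 3"]) auto
  next
    case 2
    have "n = p 1 ^ \<alpha> 1 * p 3 ^ \<alpha> 3 * p 2 ^ \<alpha> 2"
      using assms(9) by (simp add: ac_simps)
    with 2 assms bj show ?thesis
      by (intro pg_deg_prime_powers_less[where R = "p 2" and C = "\<alpha> 2"]) auto
  next
    case 3
    have "n = p 2 ^ \<alpha> 2 * p 3 ^ \<alpha> 3 * p 1 ^ \<alpha> 1"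
      using assms(9) by (simp add: ac_simps)
    with 3 assms bj show ?thesis
      by (intro pg_deg_prime_powers_less[where R = "p 1" and C = "\<alpha> 1"]) auto
  qed
qed

end
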